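(* Let $Z$ be a real random variable with $|Z|\le L$ almost surely, where $L\ge1$. Then $$\big|\tanh(\mathbb EZ)-\mathbb E\tanh(Z)\big|\le20L\cdot\mathbb E\big|\tanh(Z)-\mathbb E\tanh(Z)\big|.$$ *)

theory Defs
  imports "HOL-Probability.Probability"
begin

end

theory Submission
  imports Defs
begin

text \<open>
  Write \<open>t = E tanh Z\<close>, \<open>a = artanh t\<close> and \<open>D = E |tanh Z - t|\<close>. For \<open>z \<le> L\<close> there is a
  pointwise majorant \<open>z \<le> a + \<alpha> (tanh z - t) + \<beta> |tanh z - t|\<close>, with \<open>\<beta> = 2L / (1 - t\<^sup>2)\<close>
  if \<open>a \<ge> 0\<close> and \<open>\<beta> = L\<close> if \<open>a < 0\<close>; it comes from the concavity of tanh on \<open>[0, \<infinity>)\<close>,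
  its convexity on \<open>(-\<infinity>, 0]\<close> and the bound \<open>z \<le> (1 + z) tanh z\<close>. Taking expectations kills
  the \<open>\<alpha>\<close>-term, so \<open>E Z \<le> a + \<beta> D\<close>. Then \<open>tanh (E Z) - t\<close> is at most \<open>(1 - t\<^sup>2) \<beta> D = 2 L D\<close>
  by concavity when \<open>a \<ge> 0\<close>, and at most \<open>L D\<close> since tanh is 1-Lipschitz when \<open>a < 0\<close>.
  Applying this also to \<open>-Z\<close> gives the claim with the constant 2 in place of 20.
\<close>

lemma tanh_artanh_real:
  fixes t :: real assumes "-1 < t" "t < 1" shows "tanh (artanh t) = t"
proof -
  define q where "q = (1 + t) / (1 - t)"
  have q: "q > 0" using assms by (simp add: q_def)
  have "artanh t = ln (sqrt q)" using q by (simp add: artanh_def q_def ln_sqrt)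
  also have "tanh \<dots> = (q - 1) / (q + 1)" using q by (simp add: tanh_ln_real)
  also have "\<dots> = t" using assms by (simp add: q_def field_simps)
  finally show ?thesis .
qed

lemma tanh_real_mean_value:
  fixes a b :: real assumes "a < b"
  obtains \<xi> where "a < \<xi>" "\<xi> < b" "tanh b - tanh a = (b - a) * (1 - tanh \<xi> ^ 2)"
proof -
  have "\<And>x. (tanh has_real_derivative 1 - tanh x ^ 2) (at x)"
    by (auto intro!: derivative_eq_intros)
  from MVT2[OF assms this] that show ?thesis by blast
qed

lemma tanh_square_mono_abs:
  fixes x y :: real assumes "\<bar>x\<bar> \<le> \<bar>y\<bar>" shows "tanh x ^ 2 \<le> tanh y ^ 2"
proof -
  have "\<bar>tanh x\<bar> \<le> \<bar>tanh y\<bar>" using assms by (metis tanh_real_abs tanh_real_le_iff)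
  then show ?thesis by (metis abs_ge_zero power2_abs power_mono)
qed

lemma tanh_le_tangent_nonneg:
  fixes a z :: real assumes "0 \<le> a" "0 \<le> z"
  shows "tanh z \<le> tanh a + (1 - tanh a ^ 2) * (z - a)"
proof (cases z a rule: linorder_cases)
  case less
  then obtain \<xi> where \<xi>: "z < \<xi>" "\<xi> < a" "tanh a - tanh z = (a - z) * (1 - tanh \<xi> ^ 2)"
    by (rule tanh_real_mean_value)
  have "tanh \<xi> ^ 2 \<le> tanh a ^ 2" using \<xi> assms by (intro tanh_square_mono_abs) simp
  then have "(a - z) * (1 - tanh a ^ 2) \<le> (a - z) * (1 - tanh \<xi> ^ 2)"
    using less by (intro mult_left_mono) auto
  with \<xi>(3) show ?thesis by (simp add: algebra_simps)
next
  case greater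
  then obtain \<xi> where \<xi>: "a < \<xi>" "\<xi> < z" "tanh z - tanh a = (z - a) * (1 - tanh \<xi> ^ 2)"
    by (rule tanh_real_mean_value)
  have "tanh a ^ 2 \<le> tanh \<xi> ^ 2" using \<xi> assms by (intro tanh_square_mono_abs) simp
  then have "(z - a) * (1 - tanh \<xi> ^ 2) \<le> (z - a) * (1 - tanh a ^ 2)"
    using greater by (intro mult_left_mono) auto
  with \<xi>(3) show ?thesis by (simp add: algebra_simps)
qed simp

lemma tanh_ge_tangent_nonpos:
  fixes a z :: real assumes "a \<le> 0" "z \<le> 0"
  shows "tanh a + (1 - tanh a ^ 2) * (z - a) \<le> tanh z"
  using tanh_le_tangent_nonneg[of "-a" "-z"] assms by (simp add: algebra_simps)

lemma tanh_diff_le: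
  fixes x y :: real assumes "x \<le> y" shows "tanh y - tanh x \<le> y - x"
proof (cases "x = y")
  case False
  with assms obtain \<xi> where "tanh y - tanh x = (y - x) * (1 - tanh \<xi> ^ 2)"
    by (meson order.not_eq_order_implies_strict tanh_real_mean_value)
  moreover have "(y - x) * (1 - tanh \<xi> ^ 2) \<le> (y - x) * 1"
    using assms by (intro mult_left_mono) auto
  ultimately show ?thesis by simp
qed simp

lemma le_one_plus_mult_tanh:
  fixes z :: real assumes "0 \<le> z" shows "z \<le> (1 + z) * tanh z"
proof -
  define v where "v = exp (-2 * z)"
  have v: "0 < v" by (simp add: v_def)
  have "1 + 2 * z \<le> exp (2 * z)" using exp_ge_add_one_self[of "2 * z"] by simp
  also have "exp (2 * z) = 1 / v" by (simp add: v_def exp_minus field_simps)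
  finally have "z * (1 + v) \<le> (1 + z) * (1 - v)" using v by (simp add: field_simps)
  then have "z \<le> (1 + z) * ((1 - v) / (1 + v))" using v by (simp add: field_simps)
  then show ?thesis by (simp add: tanh_real_altdef v_def)
qed

lemma tanh_majorant_nonneg:
  fixes a z L :: real
  assumes "0 \<le> a" "z \<le> L" "1 \<le> L"
  defines "c \<equiv> 2 * L / (1 - tanh a ^ 2)"
  shows "z \<le> a + c * (tanh z - tanh a) + c * \<bar>tanh z - tanh a\<bar>"
proof (cases "z \<le> a")
  case True
  then have "c * (tanh z - tanh a) + c * \<bar>tanh z - tanh a\<bar> = 0" by (simp add: algebra_simps)
  with True show ?thesis by linarith
next
  case False
  define t where "t = tanh a"
  define \<tau> where "\<tau> = tanh (z - a)"
  have t: "0 \<le> t" "t < 1" using assms by (auto simp: t_def tanh_real_lt_1)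
  have \<tau>: "0 \<le> \<tau>" "\<tau> < 1" using False by (auto simp: \<tau>_def tanh_real_lt_1)
  have t2: "0 < 1 - t ^ 2" using t by (simp add: abs_square_less_1)
  have den: "0 < 1 + t * \<tau>" "1 + t * \<tau> \<le> 2"
    using t \<tau> by (auto simp: add_pos_nonneg intro: mult_le_one less_imp_le)
  have "tanh z = (t + \<tau>) / (1 + t * \<tau>)"
    using tanh_add[of a "z - a"] by (simp add: t_def \<tau>_def)
  then have "tanh z - t = \<tau> * (1 - t ^ 2) / (1 + t * \<tau>)"
    using den by (simp add: field_simps power2_eq_square)
  also have "\<dots> \<ge> \<tau> * (1 - t ^ 2) / 2"
    using den t2 \<tau> by (intro divide_left_mono) auto
  finally have gain: "\<tau> * (1 - t ^ 2) \<le> 2 * (tanh z - t)" by simp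
  have "z - a \<le> (1 + (z - a)) * \<tau>" using False by (simp add: \<tau>_def le_one_plus_mult_tanh)
  also have "\<dots> \<le> 2 * L * \<tau>" using assms \<tau> by (intro mult_right_mono) auto
  also have "\<dots> = c * (\<tau> * (1 - t ^ 2))" using t2 by (simp add: c_def t_def)
  also have "\<dots> \<le> c * (2 * (tanh z - t))"
    using gain t2 assms by (intro mult_left_mono) (auto simp: c_def t_def)
  finally have "z - a \<le> c * (2 * (tanh z - t))" .
  moreover have "0 \<le> tanh z - t" using gain t2 \<tau> by (smt (verit) mult_nonneg_nonneg)
  then have "c * (tanh z - t) + c * \<bar>tanh z - t\<bar> = c * (2 * (tanh z - t))" by simp
  ultimately show ?thesis unfolding t_def[symmetric] by linarith
qed

lemma tanh_majorant_nonpos: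
  fixes a z L :: real
  assumes "a \<le> 0" "z \<le> L" "1 \<le> L"
  shows "z \<le> a + (1 / (1 - tanh a ^ 2) + L) * (tanh z - tanh a) + L * \<bar>tanh z - tanh a\<bar>"
proof -
  define t where "t = tanh a"
  have t: "t \<le> 0" "-1 < t" using assms by (auto simp: t_def tanh_real_gt_neg1)
  have t2: "0 < 1 - t ^ 2" using t by (simp add: abs_square_less_1)
  have "0 \<le> L * ((tanh z - t) + \<bar>tanh z - t\<bar>)" using assms by simp
  then have hinge: "0 \<le> L * (tanh z - t) + L * \<bar>tanh z - t\<bar>" by (simp add: distrib_left)
  have split: "(1 / (1 - t ^ 2) + L) * (tanh z - t) = (tanh z - t) / (1 - t ^ 2) + L * (tanh z - t)"
    by (simp add: distrib_right)
  have "z \<le> a + (tanh z - t) / (1 - t ^ 2) + L * (tanh z - t) + L * \<bar>tanh z - t\<bar>"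
  proof (cases "z \<le> 0")
    case True
    have "t + (1 - t ^ 2) * (z - a) \<le> tanh z"
      using tanh_ge_tangent_nonpos[OF assms(1) True] by (simp add: t_def)
    then have "z \<le> a + (tanh z - t) / (1 - t ^ 2)" using t2 by (simp add: field_simps)
    with hinge show ?thesis by linarith
  next
    case False
    have "t + (1 - t ^ 2) * (0 - a) \<le> 0"
      using tanh_ge_tangent_nonpos[OF assms(1), of 0] by (simp add: t_def)
    then have "0 \<le> a - t / (1 - t ^ 2)" using t2 by (simp add: field_simps)
    moreover have "0 \<le> tanh z / (1 - t ^ 2)" using False t2 by simp
    moreover have "z \<le> (1 + z) * tanh z" using False by (simp add: le_one_plus_mult_tanh)
    moreover have "(1 + z) * tanh z \<le> 2 * L * (tanh z - t)"
      using False assms t by (intro mult_mono) auto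
    moreover have "\<bar>tanh z - t\<bar> = tanh z - t"
      using False t tanh_real_pos_iff[of z] by (intro abs_of_nonneg) linarith
    ultimately show ?thesis by (simp add: diff_divide_distrib)
  qed
  with split show ?thesis unfolding t_def[symmetric] by linarith
qed

context prob_space
begin

lemma expectation_le_of_AE_majorant:
  fixes Z Y :: "'a \<Rightarrow> real"
  assumes "integrable M Z" "integrable M Y"
    and "AE x in M. Z x \<le> a + \<alpha> * (Y x - expectation Y) + \<beta> * \<bar>Y x - expectation Y\<bar>"
  shows "expectation Z \<le> a + \<beta> * expectation (\<lambda>x. \<bar>Y x - expectation Y\<bar>)"
proof -
  let ?t = "expectation Y"
  have "expectation Z \<le> expectation (\<lambda>x. a + \<alpha> * (Y x - ?t) + \<beta> * \<bar>Y x - ?t\<bar>)"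
    using assms by (intro integral_mono_AE) auto
  also have "\<dots> = a + \<alpha> * (?t - ?t) + \<beta> * expectation (\<lambda>x. \<bar>Y x - ?t\<bar>)"
    using assms by (simp add: integral_add integral_diff prob_space)
  finally show ?thesis by simp
qed

lemma abs_expectation_tanh_less_1:
  fixes Z :: "'a \<Rightarrow> real"
  assumes "Z \<in> borel_measurable M" "AE x in M. \<bar>Z x\<bar> \<le> L"
  shows "integrable M (\<lambda>x. tanh (Z x))" "\<bar>expectation (\<lambda>x. tanh (Z x))\<bar> < 1"
proof -
  have bound: "AE x in M. \<bar>tanh (Z x)\<bar> \<le> tanh L"
    using assms(2) by eventually_elim (simp flip: tanh_real_abs)
  have "(\<lambda>x. tanh (Z x)) \<in> borel_measurable M"
    by (rule borel_measurable_continuous_on[OF _ assms(1)]) (auto intro!: continuous_intros)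
  with bound show int: "integrable M (\<lambda>x. tanh (Z x))"
    by (intro integrable_const_bound[where B = "tanh L"]) auto
  have "\<bar>expectation (\<lambda>x. tanh (Z x))\<bar> \<le> expectation (\<lambda>x. \<bar>tanh (Z x)\<bar>)"
    by (rule integral_abs_bound)
  also have "\<dots> \<le> expectation (\<lambda>x. tanh L)"
    using int bound by (intro integral_mono_AE) auto
  also have "\<dots> < 1" by (simp add: prob_space tanh_real_lt_1)
  finally show "\<bar>expectation (\<lambda>x. tanh (Z x))\<bar> < 1" .
qed

lemma tanh_expectation_le:
  fixes Z :: "'a \<Rightarrow> real"
  assumes "Z \<in> borel_measurable M" "1 \<le> L" "AE x in M. \<bar>Z x\<bar> \<le> L"
  shows "tanh (expectation Z) - expectation (\<lambda>x. tanh (Z x))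
         \<le> 2 * L * expectation (\<lambda>x. \<bar>tanh (Z x) - expectation (\<lambda>y. tanh (Z y))\<bar>)"
proof -
  define t where "t = expectation (\<lambda>x. tanh (Z x))"
  define D where "D = expectation (\<lambda>x. \<bar>tanh (Z x) - t\<bar>)"
  have D: "0 \<le> D" by (simp add: D_def)
  have intZ: "integrable M Z"
    using assms by (intro integrable_const_bound[where B = L]) auto
  note intY = abs_expectation_tanh_less_1(1)[OF assms(1,3)]
  have "\<bar>t\<bar> < 1" unfolding t_def by (rule abs_expectation_tanh_less_1(2)[OF assms(1,3)])
  then have t2: "0 < 1 - t ^ 2" by (simp add: abs_square_less_1)
  define a where "a = artanh t"
  have ta: "tanh a = t" using \<open>\<bar>t\<bar> < 1\<close> by (simp add: a_def tanh_artanh_real)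
  have "tanh (expectation Z) \<le> t + 2 * L * D"
  proof (cases "0 \<le> a")
    case True
    define c where "c = 2 * L / (1 - t ^ 2)"
    have "AE x in M. Z x \<le> a + c * (tanh (Z x) - t) + c * \<bar>tanh (Z x) - t\<bar>"
      using assms(3) by eventually_elim
        (use tanh_majorant_nonneg[OF True _ assms(2)] in \<open>simp add: ta c_def\<close>)
    then have "expectation Z \<le> a + c * D"
      using expectation_le_of_AE_majorant[OF intZ intY] by (simp add: t_def D_def)
    then have "tanh (expectation Z) \<le> tanh (a + c * D)" by simp
    also have "\<dots> \<le> tanh a + (1 - tanh a ^ 2) * (c * D)"
      using tanh_le_tangent_nonneg[of a "a + c * D"] True D t2 assms(2) by (simp add: c_def)
    also have "\<dots> = t + 2 * L * D" using t2 by (simp add: ta c_def)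
    finally show ?thesis .
  next
    case False
    have "AE x in M. Z x \<le> a + (1 / (1 - t ^ 2) + L) * (tanh (Z x) - t) + L * \<bar>tanh (Z x) - t\<bar>"
      using assms(3) by eventually_elim
        (use tanh_majorant_nonpos[of a _ L] False assms(2) in \<open>simp add: ta\<close>)
    then have "expectation Z \<le> a + L * D"
      using expectation_le_of_AE_majorant[OF intZ intY] by (simp add: t_def D_def)
    then have "tanh (expectation Z) \<le> tanh (a + L * D)" by simp
    also have "\<dots> \<le> t + L * D" using tanh_diff_le[of a "a + L * D"] D assms(2) ta by simp
    also have "\<dots> \<le> t + 2 * L * D" using D assms(2) by simp
    finally show ?thesis .
  qed
  then show ?thesis by (simp add: t_def D_def)
qed

end

theorem mainTheorem8:
  fixes M :: "'a measure" and Z :: "'a \<Rightarrow> real" and L :: real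
  assumes "prob_space M"
    and "Z \<in> borel_measurable M"
    and "L \<ge> 1"
    and "AE x in M. \<bar>Z x\<bar> \<le> L"
  shows "\<bar>tanh (prob_space.expectation M Z) - prob_space.expectation M (\<lambda>x. tanh (Z x))\<bar>
         \<le> 20 * L * prob_space.expectation M
              (\<lambda>x. \<bar>tanh (Z x) - prob_space.expectation M (\<lambda>y. tanh (Z y))\<bar>)"
proof -
  interpret prob_space M by fact
  let ?t = "expectation (\<lambda>x. tanh (Z x))"
  let ?D = "expectation (\<lambda>x. \<bar>tanh (Z x) - ?t\<bar>)"
  have "tanh (expectation Z) - ?t \<le> 2 * L * ?D"
    by (rule tanh_expectation_le[OF assms(2-4)])
  moreover have "?t - tanh (expectation Z) \<le> 2 * L * ?D"
  proof -
    have "(\<lambda>x. - Z x) \<in> borel_measurable M" using assms(2) by measurable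
    from tanh_expectation_le[OF this assms(3)] assms(4) show ?thesis
      by (simp add: abs_minus_commute)
  qed
  moreover have "2 * L * ?D \<le> 20 * L * ?D"
    using assms(3) by (intro mult_right_mono) auto
  ultimately show ?thesis by linarith
qed

end
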